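(* For every integer $k\ge1$ and $n=2k-1$, \[k^{n-1}=\sum\frac{n!}{i_0!\,i_1!\cdots i_{k-1}!},\] where the sum runs over all tuples $(i_0,\dots,i_{k-1})$ of nonnegative integers with $i_0+\cdots+i_{k-1}=n$ and $i_0+i_1+\cdots+i_s\ge 2s+2$ for each $s=0,1,\dots,k-2$. *)

theory Defs
  imports Complex_Main
begin

definition tuples :: "nat \<Rightarrow> nat \<Rightarrow> (nat \<Rightarrow> nat) set" where
  "tuples k n = {i. (\<forall>j\<ge>k. i j = 0) \<and> (\<Sum>j<k. i j) = n
                   \<and> (\<forall>s. s + 2 \<le> k \<longrightarrow> (\<Sum>j\<le>s. i j) \<ge> 2 * s + 2)}"

end

(* By the multinomial theorem, the multinomial coefficients of all weak compositions of n into
   k parts add up to k^n.  Cyclic rotation of a composition preserves its coefficient, so it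
   suffices to show that exactly one of the k rotations of each composition satisfies the prefix
   inequalities.  These say that the walk with steps i_j - 2 stays nonnegative; along the periodic
   extension of the composition this walk loses n - 2k = -1 per period, and the cycle lemma
   provides exactly one admissible starting point per period.  Hence k times the sum is k^n. *)
theory Submission
  imports Defs
begin

definition weak_compositions :: "nat \<Rightarrow> nat \<Rightarrow> (nat \<Rightarrow> nat) set" where
  "weak_compositions k n = {a. (\<forall>j\<ge>k. a j = 0) \<and> (\<Sum>j<k. a j) = n}"

lemma tuples_subset_weak_compositions: "tuples k n \<subseteq> weak_compositions k n"
  by (auto simp: tuples_def weak_compositions_def)

lemma weak_compositions_0: "weak_compositions 0 n = (if n = 0 then {\<lambda>_. 0} else {})"
  by (auto simp: weak_compositions_def)

lemma weak_compositions_Suc: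
  "weak_compositions (Suc k) n =
     (\<lambda>(m, a). a(k := m)) ` (SIGMA m:{..n}. weak_compositions k (n - m))"
proof
  show "(\<lambda>(m, a). a(k := m)) ` (SIGMA m:{..n}. weak_compositions k (n - m))
          \<subseteq> weak_compositions (Suc k) n"
    by (auto simp: weak_compositions_def)
next
  show "weak_compositions (Suc k) n
          \<subseteq> (\<lambda>(m, a). a(k := m)) ` (SIGMA m:{..n}. weak_compositions k (n - m))"
  proof
    fix b assume b: "b \<in> weak_compositions (Suc k) n"
    then have "(b k, b(k := 0)) \<in> (SIGMA m:{..n}. weak_compositions k (n - m))"
      by (auto simp: weak_compositions_def)
    moreover have "b = (\<lambda>(m, a). a(k := m)) (b k, b(k := 0))" by simp
    ultimately show "b \<in> (\<lambda>(m, a). a(k := m)) ` (SIGMA m:{..n}. weak_compositions k (n - m))"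
      by blast
  qed
qed

lemma inj_on_weak_compositions_Suc:
  "inj_on (\<lambda>(m, a). a(k := m)) (SIGMA m:{..n}. weak_compositions k (n - m))"
proof (rule inj_onI, clarify)
  fix m a m' a'
  assume "a \<in> weak_compositions k (n - m)" "a' \<in> weak_compositions k (n - m')"
    and eq: "a(k := m) = a'(k := m')"
  then have "a k = a' k" by (simp add: weak_compositions_def)
  with eq show "m = m' \<and> a = a'"
    by (metis fun_upd_eqD fun_upd_triv fun_upd_upd)
qed

lemma finite_weak_compositions: "finite (weak_compositions k n)"
  by (induction k arbitrary: n) (simp_all add: weak_compositions_0 weak_compositions_Suc)

lemma sum_inverse_prod_fact_weak_compositions:
  "(\<Sum>a\<in>weak_compositions k n. inverse (\<Prod>j<k. fact (a j))) =
     (of_nat k ^ n / fact n :: 'a :: field_char_0)"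
proof (induction k arbitrary: n)
  case 0
  then show ?case by (simp add: weak_compositions_0)
next
  case (Suc k)
  have prod_upd: "(\<Prod>j<k. fact ((a(k := m)) j)) = (\<Prod>j<k. fact (a j) :: 'a)"
    for a :: "nat \<Rightarrow> nat" and m
    by (rule prod.cong) auto
  have "(\<Sum>a\<in>weak_compositions (Suc k) n. inverse (\<Prod>j<Suc k. fact (a j)) :: 'a)
      = (\<Sum>m\<le>n. \<Sum>a\<in>weak_compositions k (n - m).
            inverse (\<Prod>j<k. fact (a j)) * inverse (fact m))"
    unfolding weak_compositions_Suc
    by (subst sum.reindex[OF inj_on_weak_compositions_Suc])
      (simp add: sum.Sigma finite_weak_compositions split_def prod_upd)
  also have "\<dots> = (\<Sum>m\<le>n. of_nat k ^ (n - m) / fact (n - m) * inverse (fact m))"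
    by (simp add: Suc sum_distrib_right[symmetric])
  also have "\<dots> = (\<Sum>m\<le>n. of_nat (n choose m) * of_nat k ^ (n - m)) / fact n"
    unfolding sum_divide_distrib by (rule sum.cong) (auto simp: binomial_fact field_simps)
  also have "\<dots> = of_nat (Suc k) ^ n / fact n"
    using binomial_ring[of 1 "of_nat k :: 'a" n] by (simp add: add.commute)
  finally show ?case .
qed

lemma multinomial_weak_compositions:
  "(\<Sum>a\<in>weak_compositions k n. fact n / (\<Prod>j<k. fact (a j))) =
     (of_nat k ^ n :: 'a :: field_char_0)"
  using sum_inverse_prod_fact_weak_compositions[of k n, where 'a='a]
  by (simp add: divide_inverse sum_distrib_left[symmetric])

lemma bij_betw_add_mod:
  fixes k r :: nat
  assumes "0 < k"
  shows "bij_betw (\<lambda>j. (j + r) mod k) {..<k} {..<k}"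
proof -
  have inj: "inj_on (\<lambda>j. (j + r) mod k) {..<k}"
  proof (rule inj_onI)
    fix x y assume "x \<in> {..<k}" "y \<in> {..<k}" and eq: "(x + r) mod k = (y + r) mod k"
    from eq have "x mod k = y mod k" by (simp add: add.assoc add.commute nat_mod_eq_iff)
    with \<open>x \<in> {..<k}\<close> \<open>y \<in> {..<k}\<close> show "x = y" by simp
  qed
  moreover have "(\<lambda>j. (j + r) mod k) ` {..<k} \<subseteq> {..<k}" using assms by auto
  ultimately show ?thesis by (simp add: bij_betw_def endo_inj_surj)
qed

definition rotate_tuple :: "nat \<Rightarrow> nat \<Rightarrow> (nat \<Rightarrow> 'a) \<Rightarrow> nat \<Rightarrow> 'a :: zero" where
  "rotate_tuple k r a = (\<lambda>j. if j < k then a ((j + r) mod k) else 0)"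

lemma rotate_tuple_0: "\<forall>j\<ge>k. a j = 0 \<Longrightarrow> rotate_tuple k 0 a = a"
  by (auto simp: rotate_tuple_def)

lemma rotate_tuple_mod: "rotate_tuple k (r mod k) a = rotate_tuple k r a"
  unfolding rotate_tuple_def mod_add_right_eq ..

lemma rotate_tuple_rotate_tuple:
  "rotate_tuple k r (rotate_tuple k s a) = rotate_tuple k (r + s) a"
  by (auto simp: rotate_tuple_def mod_add_left_eq add.assoc)

lemma rotate_tuple_inverse:
  assumes "\<forall>j\<ge>k. a j = 0" and "r \<le> k"
  shows "rotate_tuple k ((k - r) mod k) (rotate_tuple k r a) = a"
proof -
  have "((k - r) mod k + r) mod k = 0" using assms(2) by (simp add: mod_add_left_eq)
  then have "rotate_tuple k ((k - r) mod k) (rotate_tuple k r a) = rotate_tuple k 0 a"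
    by (metis rotate_tuple_rotate_tuple rotate_tuple_mod)
  then show ?thesis using assms(1) by (simp add: rotate_tuple_0)
qed

lemma sum_rotate_tuple:
  "0 < k \<Longrightarrow>
     (\<Sum>j<k. f (rotate_tuple k r a j)) = (\<Sum>j<k. f (a j) :: 'b :: comm_monoid_add)"
  unfolding rotate_tuple_def
  using sum.reindex_bij_betw[OF bij_betw_add_mod[of k r], of "\<lambda>j. f (a j)"] by simp

lemma prod_rotate_tuple:
  "0 < k \<Longrightarrow>
     (\<Prod>j<k. f (rotate_tuple k r a j)) = (\<Prod>j<k. f (a j) :: 'b :: comm_monoid_mult)"
  unfolding rotate_tuple_def
  using prod.reindex_bij_betw[OF bij_betw_add_mod[of k r], of "\<lambda>j. f (a j)"] by simp

lemma rotate_tuple_weak_compositions: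
  "0 < k \<Longrightarrow> a \<in> weak_compositions k n \<Longrightarrow> rotate_tuple k r a \<in> weak_compositions k n"
  using sum_rotate_tuple[of k id r a]
  by (simp add: weak_compositions_def) (simp add: rotate_tuple_def)

lemma cycle_lemma:
  fixes P :: "nat \<Rightarrow> int"
  assumes "0 < k" and drift: "\<And>t. P (t + k) = P t - 1"
  shows "\<exists>!s. s < k \<and> (\<forall>m. 0 < m \<and> m < k \<longrightarrow> P s \<le> P (s + m))"
proof (rule ex_ex1I)
  define low where "low = Min (P ` {..<k})"
  have low_le: "low \<le> P t" if "t < k" for t
    using that by (simp add: low_def)
  have "low \<in> P ` {..<k}"
    unfolding low_def using \<open>0 < k\<close> by (intro Min_in) auto
  then obtain r where r: "r < k" "P r = low" and before_r: "\<And>t. t < r \<Longrightarrow> P t \<noteq> low"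
    using exists_least_iff[of "\<lambda>t. t < k \<and> P t = low"] by (auto dest: order.strict_trans)
  show "\<exists>s. s < k \<and> (\<forall>m. 0 < m \<and> m < k \<longrightarrow> P s \<le> P (s + m))"
  proof (intro exI[of _ r] conjI allI impI)
    fix m assume m: "0 < m \<and> m < k"
    show "P r \<le> P (r + m)"
    proof (cases "r + m < k")
      case True
      then show ?thesis using low_le r by simp
    next
      case False
      \<comment> \<open>r + m - k lies before the first minimum r, so P there exceeds the minimum\<close>
      then have "P (r + m) = P (r + m - k) - 1"
        using drift[of "r + m - k"] by simp
      moreover have "P (r + m - k) > low"
        using before_r[of "r + m - k"] low_le[of "r + m - k"] m False r(1) by fastforce
      ultimately show ?thesis using r by simp
    qed
  qed (fact r(1))
next
  fix s s'
  assume s: "s < k \<and> (\<forall>m. 0 < m \<and> m < k \<longrightarrow> P s \<le> P (s + m))"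
    and s': "s' < k \<and> (\<forall>m. 0 < m \<and> m < k \<longrightarrow> P s' \<le> P (s' + m))"
  have False if "a < b" "b < k"
    and "\<forall>m. 0 < m \<and> m < k \<longrightarrow> P a \<le> P (a + m)"
    and "\<forall>m. 0 < m \<and> m < k \<longrightarrow> P b \<le> P (b + m)" for a b
  proof -
    have "P a \<le> P b" using that(3)[rule_format, of "b - a"] that(1,2) by simp
    moreover have "P b \<le> P (a + k)" using that(4)[rule_format, of "a + k - b"] that(1,2) by simp
    ultimately show False using drift[of a] by simp
  qed
  with s s' show "s = s'" by (metis linorder_neqE_nat)
qed

definition cyclic_walk :: "nat \<Rightarrow> (nat \<Rightarrow> nat) \<Rightarrow> nat \<Rightarrow> int" where
  "cyclic_walk k a t = (\<Sum>j<t. int (a (j mod k)) - 2)"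

lemma cyclic_walk_add:
  "cyclic_walk k a (s + m) = cyclic_walk k a s + (\<Sum>j<m. int (a ((j + s) mod k)) - 2)"
  by (induction m) (simp_all add: cyclic_walk_def add.commute)

lemma cyclic_walk_add_period:
  assumes "0 < k"
  shows "cyclic_walk k a (t + k) = cyclic_walk k a t + int (\<Sum>j<k. a j) - 2 * int k"
proof -
  have "(\<Sum>j<k. int (a ((j + t) mod k)) - 2) = (\<Sum>j<k. int (a j) - 2)"
    using sum_rotate_tuple[OF assms, of "\<lambda>x. int x - 2" t a]
    by (simp add: rotate_tuple_def)
  then show ?thesis
    by (simp add: cyclic_walk_add sum_subtractf)
qed

lemma rotate_tuple_in_tuples_iff:
  assumes "0 < k" and a: "a \<in> weak_compositions k n"
  shows "rotate_tuple k s a \<in> tuples k n \<longleftrightarrow>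
           (\<forall>m. 0 < m \<and> m < k \<longrightarrow> cyclic_walk k a s \<le> cyclic_walk k a (s + m))"
proof -
  have rotated: "rotate_tuple k s a \<in> weak_compositions k n"
    using rotate_tuple_weak_compositions[OF assms] .
  have prefix: "int (\<Sum>j<m. rotate_tuple k s a j) - 2 * int m =
                   cyclic_walk k a (s + m) - cyclic_walk k a s" if "m \<le> k" for m
    using that by (simp add: cyclic_walk_add sum_subtractf rotate_tuple_def)
  have shift_index:
    "(\<forall>s'. s' + 2 \<le> k \<longrightarrow> Q (Suc s')) \<longleftrightarrow> (\<forall>m. 0 < m \<and> m < k \<longrightarrow> Q m)" for Q
    by (auto simp: gr0_conv_Suc)
  have "rotate_tuple k s a \<in> tuples k n \<longleftrightarrow>
          (\<forall>s'. s' + 2 \<le> k \<longrightarrow> 2 * Suc s' \<le> (\<Sum>j<Suc s'. rotate_tuple k s a j))"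
    using rotated by (simp add: tuples_def weak_compositions_def lessThan_Suc_atMost)
  also have "\<dots> \<longleftrightarrow> (\<forall>m. 0 < m \<and> m < k \<longrightarrow> 2 * m \<le> (\<Sum>j<m. rotate_tuple k s a j))"
    by (rule shift_index[of "\<lambda>m. 2 * m \<le> (\<Sum>j<m. rotate_tuple k s a j)"])
  also have "\<dots> \<longleftrightarrow> (\<forall>m. 0 < m \<and> m < k \<longrightarrow> cyclic_walk k a s \<le> cyclic_walk k a (s + m))"
  proof -
    have "2 * m \<le> (\<Sum>j<m. rotate_tuple k s a j) \<longleftrightarrow>
            cyclic_walk k a s \<le> cyclic_walk k a (s + m)" if "m < k" for m
      using prefix[of m] that by linarith
    then show ?thesis by auto
  qed
  finally show ?thesis .
qed

lemma ex1_rotate_tuple_in_tuples: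
  assumes "0 < k" and a: "a \<in> weak_compositions k (2 * k - 1)"
  shows "\<exists>!s. s < k \<and> rotate_tuple k s a \<in> tuples k (2 * k - 1)"
proof -
  have total: "(\<Sum>j<k. a j) = 2 * k - 1"
    using a by (simp add: weak_compositions_def)
  have "cyclic_walk k a (t + k) = cyclic_walk k a t - 1" for t
    using cyclic_walk_add_period[OF \<open>0 < k\<close>, of a t, unfolded total] \<open>0 < k\<close>
    by (simp add: of_nat_diff)
  from cycle_lemma[where P = "cyclic_walk k a", OF \<open>0 < k\<close> this] show ?thesis
    by (simp only: rotate_tuple_in_tuples_iff[OF assms])
qed

lemma bij_betw_rotate_tuple:
  assumes "0 < k" and "G \<subseteq> weak_compositions k n"
    and unique: "\<And>a. a \<in> weak_compositions k n \<Longrightarrow> \<exists>!s. s < k \<and> rotate_tuple k s a \<in> G"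
  shows "bij_betw (\<lambda>(a, r). rotate_tuple k r a) (G \<times> {..<k}) (weak_compositions k n)"
proof -
  have undo: "rotate_tuple k ((k - r) mod k) (rotate_tuple k r a) = a"
    if "a \<in> weak_compositions k n" "r \<le> k" for a r
    using that by (simp add: rotate_tuple_inverse weak_compositions_def)
  have "inj_on (\<lambda>(a, r). rotate_tuple k r a) (G \<times> {..<k})"
  proof (rule inj_onI, clarify)
    fix a r a' r'
    assume "a \<in> G" "r < k" "a' \<in> G" "r' < k"
      and eq: "rotate_tuple k r a = rotate_tuple k r' a'"
    then have a: "a \<in> weak_compositions k n" and a': "a' \<in> weak_compositions k n"
      using assms(2) by auto
    let ?b = "rotate_tuple k r a"
    have "?b \<in> weak_compositions k n"
      using rotate_tuple_weak_compositions[OF \<open>0 < k\<close> a] .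
    moreover have "rotate_tuple k ((k - r) mod k) ?b \<in> G"
      using undo[OF a] \<open>a \<in> G\<close> \<open>r < k\<close> by simp
    moreover have "rotate_tuple k ((k - r') mod k) ?b \<in> G"
      unfolding eq using undo[OF a'] \<open>a' \<in> G\<close> \<open>r' < k\<close> by simp
    moreover have "(k - r) mod k < k" "(k - r') mod k < k"
      using \<open>0 < k\<close> by simp_all
    ultimately have "(k - r) mod k = (k - r') mod k"
      using unique by blast
    then have "r = r'"
      using \<open>r < k\<close> \<open>r' < k\<close> by (metis diff_less_mono2 less_imp_diff_less less_not_refl
        linorder_neqE_nat mod_if)
    with eq have "a = a'"
      using undo[OF a] undo[OF a'] \<open>r < k\<close> by (metis less_imp_le)
    with \<open>r = r'\<close> show "a = a' \<and> r = r'" by simp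
  qed
  moreover have "weak_compositions k n \<subseteq> (\<lambda>(a, r). rotate_tuple k r a) ` (G \<times> {..<k})"
  proof
    fix b assume b: "b \<in> weak_compositions k n"
    then obtain s where "s < k" "rotate_tuple k s b \<in> G"
      using unique by blast
    moreover have "b = rotate_tuple k ((k - s) mod k) (rotate_tuple k s b)"
      using undo[OF b] \<open>s < k\<close> by simp
    ultimately show "b \<in> (\<lambda>(a, r). rotate_tuple k r a) ` (G \<times> {..<k})"
      using \<open>0 < k\<close>
      by (intro image_eqI[where x = "(rotate_tuple k s b, (k - s) mod k)"]) auto
  qed
  moreover have "(\<lambda>(a, r). rotate_tuple k r a) ` (G \<times> {..<k}) \<subseteq> weak_compositions k n"
    using assms(2) rotate_tuple_weak_compositions[OF \<open>0 < k\<close>] by auto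
  ultimately show ?thesis
    by (auto simp: bij_betw_def)
qed

lemma sum_weak_compositions_by_rotation:
  assumes "0 < k" and "G \<subseteq> weak_compositions k n"
    and "\<And>a. a \<in> weak_compositions k n \<Longrightarrow> \<exists>!s. s < k \<and> rotate_tuple k s a \<in> G"
    and invariant: "\<And>a r. a \<in> weak_compositions k n \<Longrightarrow> f (rotate_tuple k r a) = f a"
  shows "(\<Sum>b\<in>weak_compositions k n. f b) =
           of_nat k * (\<Sum>a\<in>G. f a :: 'b :: comm_semiring_1)"
proof -
  have "(\<Sum>b\<in>weak_compositions k n. f b) = (\<Sum>(a, r)\<in>G \<times> {..<k}. f (rotate_tuple k r a))"
    using sum.reindex_bij_betw[OF bij_betw_rotate_tuple[OF assms(1-3)], of f]
    by (simp add: case_prod_beta')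
  also have "\<dots> = (\<Sum>(a, r)\<in>G \<times> {..<k}. f a)"
    using assms(2) invariant by (intro sum.cong) auto
  also have "\<dots> = of_nat k * (\<Sum>a\<in>G. f a)"
    by (simp add: sum.cartesian_product[symmetric] sum_distrib_left mult.commute)
  finally show ?thesis .
qed

theorem mainTheorem10:
  fixes k n :: nat
  assumes "k \<ge> 1" and "n = 2 * k - 1"
  shows "(of_nat k :: rat) ^ (n - 1) =
         (\<Sum>i\<in>tuples k n. of_nat (fact n) / (\<Prod>j<k. of_nat (fact (i j))))"
proof -
  have "0 < k" using assms(1) by simp
  have "of_nat k * of_nat k ^ (n - 1) = (of_nat k ^ n :: rat)"
    using assms by (simp add: power_eq_if)
  also have "\<dots> = (\<Sum>b\<in>weak_compositions k n. fact n / (\<Prod>j<k. fact (b j)))"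
    by (rule multinomial_weak_compositions[symmetric])
  also have "\<dots> = of_nat k * (\<Sum>a\<in>tuples k n. fact n / (\<Prod>j<k. fact (a j)))"
    using \<open>0 < k\<close> tuples_subset_weak_compositions ex1_rotate_tuple_in_tuples[OF \<open>0 < k\<close>]
      prod_rotate_tuple[OF \<open>0 < k\<close>] assms(2)
    by (intro sum_weak_compositions_by_rotation) auto
  finally show ?thesis
    using \<open>0 < k\<close> by simp
qed

end
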